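(* Let $\bm\mu=(\mu_1,\dots,\mu_r)$ be finite positive Borel measures on the unit circle with infinite supports, fix the square-root branch as in the context, let $\bm n\in\mathbb N^r$ be $\phi$-normal for $\bm\mu$ and $\tau\in\partial\mathbb D$. Let $X\not\equiv0$ be a $\tau$-invariant paraorthogonal function for $\bm n$ (see context). Suppose that for every $z_0\in\mathbb C$ with $z_0\neq0$ and $|z_0|\neq1$, the index $\bm n$ is also $\phi$-normal with respect to the system $(|z-z_0|^2d\mu_1(z),\dots,|z-z_0|^2d\mu_r(z))$. Then the polynomial $z^{(|\bm n|+1)/2}X(z)$ has degree $|\bm n|+1$ and all of its $|\bm n|+1$ zeros lie on the unit circle $\partial\mathbb D$.
   Context: $\partial\mathbb D=\{|z|=1\}$. Fix $t_0\in\mathbb R$ and let $z^{k/2}=|z|^{k/2}\exp(ik\arg_{[t_0,t_0+2\pi)}(z)/2)$, $k\in\mathbb Z$. $|\bm n|=\sum_j n_j$; $\operatorname{span}\{z^p\}_{p=a}^b$ ($b-a\in\mathbb Z$) is the span of $z^a,z^{a+1},\dots,z^b$. For a system $\bm\nu=(\nu_1,\dots,\nu_r)$ of measures on $\partial\mathbb D$, $\bm n$ is $\phi$-normal w.r.t. $\bm\nu$ if there is a unique $\phi\in\operatorname{span}\{z^p\}_{p=-|\bm n|/2}^{|\bm n|/2}$ with coefficient of $z^{|\bm n|/2}$ equal to $1$ such that $\int\phi(z)z^{-p}\,d\nu_j(z)=0$ for $p=-n_j/2,\dots,n_j/2-1$, $j=1,\dots,r$. A $\tau$-invariant paraorthogonal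 function for $\bm n$ is any $X\in\operatorname{span}\{z^p\}_{p=-(|\bm n|+1)/2}^{(|\bm n|+1)/2}$ with $X(z)=\tau\overline{X(1/\bar z)}$ and $\int X(z)z^{-p}\,d\mu_j(z)=0$ for $p=-(n_j-1)/2,\dots,(n_j-1)/2$, $j=1,\dots,r$. (For example, $z^{1/2}\phi_{\bm n}(z)+\tau z^{-1/2}\overline{\phi_{\bm n}(1/\bar z)}$.) Note $z^{(|\bm n|+1)/2}X(z)$ is a polynomial of degree at most $|\bm n|+1$; zeros of $X$ refer to zeros of this polynomial. *)

theory Defs
  imports "HOL-Analysis.Analysis" "HOL-Computational_Algebra.Polynomial"
begin

definition argb :: "real \<Rightarrow> complex \<Rightarrow> real" where
  "argb t0 z = t0 + ((Arg z - t0) - 2 * pi * of_int \<lfloor>(Arg z - t0) / (2 * pi)\<rfloor>)"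

text \<open>Half-integer power: hpow t0 k z is z^(k/2) = |z|^(k/2) exp(i k arg(z)/2)
  with the branch of arg in [t0, t0 + 2 pi).\<close>
definition hpow :: "real \<Rightarrow> int \<Rightarrow> complex \<Rightarrow> complex" where
  "hpow t0 k z = complex_of_real (cmod z powr (real_of_int k / 2)) *
                 exp (\<i> * complex_of_real (real_of_int k * argb t0 z / 2))"

text \<open>The function  sum_{j=0}^{N} c_j z^{(2j - N)/2}, an element of span{z^p}_{p=-N/2}^{N/2},
  whose coefficient of z^{N/2} is c N.\<close>
definition hsum :: "real \<Rightarrow> nat \<Rightarrow> (nat \<Rightarrow> complex) \<Rightarrow> complex \<Rightarrow> complex" where
  "hsum t0 N c = (\<lambda>z. \<Sum>j\<le>N. c j * hpow t0 (2 * int j - int N) z)"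

definition hspan :: "real \<Rightarrow> nat \<Rightarrow> (complex \<Rightarrow> complex) set" where
  "hspan t0 N = {f. \<exists>c. f = hsum t0 N c}"

definition nsize :: "nat \<Rightarrow> (nat \<Rightarrow> nat) \<Rightarrow> nat" where
  "nsize r n = (\<Sum>j<r. n j)"

text \<open>The orthogonality conditions p = -n_j/2, ..., n_j/2 - 1 are written p = (2k - n_j)/2,
  k = 0..n_j-1, so z^(-p) = hpow t0 (n_j - 2k).\<close>
definition phi_normal :: "real \<Rightarrow> nat \<Rightarrow> (nat \<Rightarrow> complex measure) \<Rightarrow> (nat \<Rightarrow> nat) \<Rightarrow> bool" where
  "phi_normal t0 r \<nu> n \<longleftrightarrow>
     (\<exists>!\<phi>. (\<exists>c. c (nsize r n) = 1 \<and> \<phi> = hsum t0 (nsize r n) c) \<and>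
            (\<forall>j<r. \<forall>k<n j. integral\<^sup>L (\<nu> j) (\<lambda>z. \<phi> z * hpow t0 (int (n j) - 2 * int k) z) = 0))"

text \<open>tau-invariant paraorthogonal function for n w.r.t. mu_0, ..., mu_{r-1}.
  Conditions p = -(n_j-1)/2, ..., (n_j-1)/2 are written p = (2k - n_j + 1)/2, k = 0..n_j-1.\<close>
definition paraorth :: "real \<Rightarrow> nat \<Rightarrow> (nat \<Rightarrow> complex measure) \<Rightarrow> (nat \<Rightarrow> nat) \<Rightarrow> complex
                        \<Rightarrow> (complex \<Rightarrow> complex) \<Rightarrow> bool" where
  "paraorth t0 r \<mu> n \<tau> X \<longleftrightarrow>
     X \<in> hspan t0 (nsize r n + 1) \<and>
     (\<forall>z. z \<noteq> 0 \<longrightarrow> X z = \<tau> * cnj (X (1 / cnj z))) \<and>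
     (\<forall>j<r. \<forall>k<n j. integral\<^sup>L (\<mu> j) (\<lambda>z. X z * hpow t0 (int (n j) - 1 - 2 * int k) z) = 0)"

definition msupport :: "complex measure \<Rightarrow> complex set" where
  "msupport M = {x. \<forall>e>0. emeasure M (ball x e) > 0}"

text \<open>Finite positive Borel measure on the unit circle (as a measure on C concentrated on |z| = 1).\<close>
definition circle_measure :: "complex measure \<Rightarrow> bool" where
  "circle_measure M \<longleftrightarrow> sets M = sets borel \<and> finite_measure M \<and>
                         emeasure M (UNIV - sphere 0 1) = 0"

end

theory Submission
  imports Defs
begin

text \<open>Write X(z) = z^(-(N+1)/2) P(z) with N = |n| and P a polynomial of degree at most N + 1.
  The symmetry X(z) = \<tau> cnj (X (1 / cnj z)) makes the constant term of P equal to \<tau> times the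
  conjugate of its top coefficient, and makes the roots of P come in pairs z0, 1 / cnj z0.
  If the top coefficient vanished, so would the constant term, and z^(-1/2) X would be an element
  of span{z^p}, p = -N/2 .. N/2, with zero top coefficient satisfying all orthogonality conditions
  of \<phi>-normality; adding it to \<phi>_n contradicts uniqueness unless X = 0.
  If P had a root z0 off the circle, then P = (z - z0)(z - 1 / cnj z0) R, and on the circle
  |z - z0|^2 z = - cnj z0 (z - z0)(z - 1 / cnj z0). Hence z^(-N/2) R(z) satisfies the orthogonality
  conditions for the system |z - z0|^2 d\<mu>_j and has zero top coefficient, and normality of that
  system forces R = 0.\<close>

lemma Arg_borel_measurable: "Arg \<in> borel_measurable borel"
proof -
  have "(\<lambda>z. if z \<in> - \<real>\<^sub>\<le>\<^sub>0 then Arg z else if z = 0 then 0 else pi) \<in> borel_measurable borel"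
  proof (subst measurable_If_restrict_space_iff)
    have "(- \<real>\<^sub>\<le>\<^sub>0 :: complex set) \<in> sets borel"
      by (simp add: borel_open open_Compl)
    then show "{z \<in> space borel. z \<in> (- \<real>\<^sub>\<le>\<^sub>0 :: complex set)} \<in> sets borel"
      by (simp add: Compl_eq)
    have "{z. z \<in> - \<real>\<^sub>\<le>\<^sub>0} = (- \<real>\<^sub>\<le>\<^sub>0 :: complex set)"
      by auto
    then have "Arg \<in> borel_measurable (restrict_space borel {z. z \<in> - \<real>\<^sub>\<le>\<^sub>0})"
      using borel_measurable_continuous_on_restrict[OF continuous_on_Arg] by simp
    moreover have "(\<lambda>z::complex. if z = 0 then 0 else pi) \<in> borel_measurable borel"
      by measurable
    ultimately show "Arg \<in> borel_measurable (restrict_space borel {z. z \<in> - \<real>\<^sub>\<le>\<^sub>0}) \<and>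
        (\<lambda>z::complex. if z = 0 then 0 else pi)
          \<in> borel_measurable (restrict_space borel {z. z \<notin> - \<real>\<^sub>\<le>\<^sub>0})"
      by (auto intro: measurable_restrict_space1)
  qed
  also have "(\<lambda>z. if z \<in> - \<real>\<^sub>\<le>\<^sub>0 then Arg z else if z = 0 then 0 else pi) = Arg"
    by (auto simp: fun_eq_iff Arg_zero nonpos_Reals_def Arg_of_real)
  finally show ?thesis .
qed

lemma argb_borel_measurable[measurable]: "argb t0 \<in> borel_measurable borel"
  unfolding argb_def using Arg_borel_measurable by measurable

lemma hpow_borel_measurable[measurable]: "hpow t0 k \<in> borel_measurable borel"
  unfolding hpow_def by measurable

lemma hsum_borel_measurable[measurable]: "hsum t0 N c \<in> borel_measurable borel"
  unfolding hsum_def by measurable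

lemma hpow_add: "hpow t0 a z * hpow t0 b z = hpow t0 (a + b) z"
  by (cases "z = 0") (simp_all add: hpow_def powr_add add_divide_distrib distrib_left distrib_right exp_add)

lemma hpow_0: "z \<noteq> 0 \<Longrightarrow> hpow t0 0 z = 1"
  by (simp add: hpow_def)

lemma hpow_eq_0_iff: "hpow t0 k z = 0 \<longleftrightarrow> z = 0"
  by (simp add: hpow_def)

lemma norm_hpow: "cmod (hpow t0 k z) = cmod z powr (real_of_int k / 2)"
  by (simp add: hpow_def norm_mult)

lemma hpow_2: "hpow t0 2 z = z"
proof (cases "z = 0")
  case False
  define m where "m = \<lfloor>(Arg z - t0) / (2 * pi)\<rfloor>"
  have argb: "argb t0 z = Arg z + 2 * of_int (- m) * pi"
    by (simp add: argb_def m_def)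
  have "exp (\<i> * complex_of_real (argb t0 z)) = exp (\<i> * Arg z) * exp (2 * of_int (- m) * pi * \<i>)"
    unfolding argb by (simp add: exp_add[symmetric] algebra_simps)
  also have "\<dots> = exp (\<i> * Arg z)"
    by (subst exp_integer_2pi) simp_all
  finally show ?thesis
    using Arg_eq[OF False] by (simp add: hpow_def)
qed (simp add: hpow_def)

lemma hpow_double: "z \<noteq> 0 \<Longrightarrow> hpow t0 (2 * int m) z = z ^ m"
proof (induction m)
  case (Suc m)
  have "hpow t0 (2 * int (Suc m)) z = hpow t0 (2 * int m) z * hpow t0 2 z"
    by (simp add: hpow_add algebra_simps)
  with Suc show ?case
    by (simp add: hpow_2)
qed (simp add: hpow_0)

lemma cnj_hpow_inverse:
  assumes "z \<noteq> 0"
  shows "cnj (hpow t0 k (1 / cnj z)) = hpow t0 (- k) z"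
proof -
  have inverse: "1 / cnj z = z * of_real (1 / (cmod z)\<^sup>2)"
    using assms by (simp add: complex_div_cnj[of 1 z] field_simps complex_norm_square[symmetric])
  have "Arg (1 / cnj z) = Arg z"
    unfolding inverse by (rule Arg_times_of_real2) (use assms in simp)
  moreover have "(1 / cmod z) powr (real_of_int k / 2) = cmod z powr (real_of_int (- k) / 2)"
    using assms by (simp add: powr_divide powr_minus_divide)
  ultimately show ?thesis
    by (simp add: hpow_def argb_def norm_divide exp_cnj)
qed

definition hsum_poly :: "nat \<Rightarrow> (nat \<Rightarrow> complex) \<Rightarrow> complex poly" where
  "hsum_poly N c = (\<Sum>j\<le>N. monom (c j) j)"

lemma coeff_hsum_poly: "coeff (hsum_poly N c) i = (if i \<le> N then c i else 0)"
  by (simp add: hsum_poly_def coeff_sum coeff_monom)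

lemma degree_hsum_poly: "c N \<noteq> 0 \<Longrightarrow> degree (hsum_poly N c) = N"
  by (intro antisym degree_le le_degree) (auto simp: coeff_hsum_poly)

lemma hsum_poly_coeff: "degree p \<le> N \<Longrightarrow> hsum_poly N (coeff p) = p"
  by (rule poly_eqI) (auto simp: coeff_hsum_poly coeff_eq_0)

lemma hsum_coeff_hsum_poly: "hsum t0 N (coeff (hsum_poly N c)) = hsum t0 N c"
  by (auto simp: fun_eq_iff hsum_def coeff_hsum_poly intro!: sum.cong)

lemma hpow_mult_hsum: "z \<noteq> 0 \<Longrightarrow> hpow t0 (int N) z * hsum t0 N c z = poly (hsum_poly N c) z"
  by (simp add: hsum_def hsum_poly_def sum_distrib_left poly_sum poly_monom mult.left_commute
      hpow_add hpow_double)

lemma hsum_coeff: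
  assumes "z \<noteq> 0" and "degree p \<le> N"
  shows "hsum t0 N (coeff p) z = hpow t0 (- int N) z * poly p z"
proof -
  have "hpow t0 (- int N) z * poly p z = hpow t0 (- int N) z * hpow t0 (int N) z * hsum t0 N (coeff p) z"
    using hpow_mult_hsum[OF assms(1), of t0 N "coeff p"] hsum_poly_coeff[OF assms(2)] by simp
  then show ?thesis
    using assms(1) by (simp add: hpow_add hpow_0)
qed

lemma poly_eq_if_eq_off_0:
  fixes p q :: "'a::{idom, ring_char_0} poly"
  assumes "\<And>z. z \<noteq> 0 \<Longrightarrow> poly p z = poly q z"
  shows "p = q"
proof (rule ccontr)
  assume "p \<noteq> q"
  then have "finite {z. poly (p - q) z = 0}"
    by (intro poly_roots_finite) simp
  moreover have "- {0} \<subseteq> {z. poly (p - q) z = 0}"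
    using assms by auto
  ultimately have "finite (- {0 :: 'a})"
    by (rule finite_subset[rotated])
  then show False
    by (simp add: infinite_UNIV_char_0)
qed

lemma hsum_coeff_eqI:
  assumes "\<And>z. z \<noteq> 0 \<Longrightarrow> hsum t0 N c z = hsum t0 N d z" and "i \<le> N"
  shows "c i = d i"
proof -
  have "hsum_poly N c = hsum_poly N d"
    by (rule poly_eq_if_eq_off_0) (metis assms(1) hpow_mult_hsum)
  then have "coeff (hsum_poly N c) i = coeff (hsum_poly N d) i"
    by simp
  with assms(2) show ?thesis
    by (simp add: coeff_hsum_poly)
qed

lemma hsum_coeff_eq_0D:
  assumes "hsum t0 N (coeff p) = (\<lambda>z. 0)" and "degree p \<le> N"
  shows "p = 0"
proof (rule poly_eq_if_eq_off_0)
  fix z :: complex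
  assume "z \<noteq> 0"
  then show "poly p z = poly 0 z"
    using hsum_coeff[OF \<open>z \<noteq> 0\<close> assms(2), of t0] assms(1) by (simp add: hpow_eq_0_iff)
qed

lemma cnj_hsum_inverse:
  assumes "z \<noteq> 0"
  shows "cnj (hsum t0 N c (1 / cnj z)) = hsum t0 N (\<lambda>j. cnj (c (N - j))) z"
proof -
  have "cnj (hsum t0 N c (1 / cnj z)) = (\<Sum>j\<le>N. cnj (c j) * hpow t0 (2 * int (N - j) - int N) z)"
    by (auto simp: hsum_def cnj_hpow_inverse[OF assms] of_nat_diff intro!: sum.cong)
  also have "\<dots> = hsum t0 N (\<lambda>j. cnj (c (N - j))) z"
    unfolding hsum_def
    by (rule sum.reindex_bij_witness[where i = "\<lambda>j. N - j" and j = "\<lambda>j. N - j"]) auto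
  finally show ?thesis .
qed

lemma hsum_coeff_reflect:
  assumes "\<And>z. z \<noteq> 0 \<Longrightarrow> hsum t0 N c z = \<tau> * cnj (hsum t0 N c (1 / cnj z))" and "i \<le> N"
  shows "c i = \<tau> * cnj (c (N - i))"
proof (rule hsum_coeff_eqI[where d = "\<lambda>j. \<tau> * cnj (c (N - j))", OF _ assms(2)])
  fix z :: complex
  assume "z \<noteq> 0"
  then have "hsum t0 N c z = \<tau> * hsum t0 N (\<lambda>j. cnj (c (N - j))) z"
    using assms(1) cnj_hsum_inverse by simp
  then show "hsum t0 N c z = hsum t0 N (\<lambda>j. \<tau> * cnj (c (N - j))) z"
    by (simp add: hsum_def sum_distrib_left mult.assoc)
qed

lemma hsum_Suc_shift:
  assumes "c 0 = 0"
  shows "hsum t0 (Suc N) c z = hpow t0 1 z * hsum t0 N (\<lambda>i. c (Suc i)) z"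
  unfolding hsum_def sum.atMost_Suc_shift using assms
  by (simp add: sum_distrib_left mult.left_commute hpow_add algebra_simps)

lemma norm_hsum_le:
  assumes "cmod z = 1"
  shows "cmod (hsum t0 N c z) \<le> (\<Sum>j\<le>N. cmod (c j))"
  unfolding hsum_def
  by (rule order_trans[OF norm_sum]) (simp add: norm_mult norm_hpow assms)

lemma measurable_circle_measure:
  "circle_measure M \<Longrightarrow> f \<in> borel_measurable borel \<Longrightarrow> f \<in> borel_measurable M"
  unfolding circle_measure_def by (metis measurable_cong_sets)

lemma null_sets_circle_measure:
  assumes "circle_measure M"
  shows "UNIV - sphere 0 1 \<in> null_sets M"
proof -
  have "UNIV - sphere (0 :: complex) 1 \<in> sets borel"
    by (simp add: borel_open open_Diff)
  with assms show ?thesis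
    by (simp add: circle_measure_def null_sets_def)
qed

lemma AE_circle_measure: "circle_measure M \<Longrightarrow> AE z in M. cmod z = 1"
  by (rule AE_I'[OF null_sets_circle_measure]) auto

lemma integrable_circle_measure:
  fixes f :: "complex \<Rightarrow> 'b::{banach, second_countable_topology}"
  assumes M: "circle_measure M" and f: "f \<in> borel_measurable borel"
    and bound: "\<And>z. cmod z = 1 \<Longrightarrow> norm (f z) \<le> B"
  shows "integrable M f"
proof -
  interpret finite_measure M
    using M by (simp add: circle_measure_def)
  show ?thesis
  proof (rule integrable_const_bound)
    show "AE z in M. norm (f z) \<le> B"
      using AE_circle_measure[OF M] by eventually_elim (rule bound)
  qed (rule measurable_circle_measure[OF M f])
qed

lemma integrable_circle_measure_hsum:
  assumes "circle_measure M"
  shows "integrable M (\<lambda>z. hsum t0 N c z * hpow t0 m z)"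
proof (rule integrable_circle_measure[OF assms])
  fix z :: complex
  assume "cmod z = 1"
  then show "norm (hsum t0 N c z * hpow t0 m z) \<le> (\<Sum>j\<le>N. cmod (c j))"
    by (simp add: norm_mult norm_hpow norm_hsum_le)
qed measurable

lemma circle_measure_density:
  assumes M: "circle_measure M" and g: "continuous_on UNIV g"
  shows "circle_measure (density M (\<lambda>z. ennreal (g z)))"
proof -
  interpret finite_measure M
    using M by (simp add: circle_measure_def)
  have "g \<in> borel_measurable M"
    by (rule measurable_circle_measure[OF M borel_measurable_continuous_onI[OF g]])
  then have g_meas: "(\<lambda>z. ennreal (g z)) \<in> borel_measurable M"
    by measurable
  have "bounded (g ` sphere 0 1)"
    by (intro compact_imp_bounded compact_continuous_image continuous_on_subset[OF g]) auto
  then obtain B where B: "\<forall>x \<in> g ` sphere 0 1. norm x \<le> B"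
    unfolding bounded_iff by blast
  have bound: "g z \<le> B" if "cmod z = 1" for z
  proof -
    from that B have "norm (g z) \<le> B"
      by simp
    then show ?thesis
      by simp
  qed
  have "AE z in M. ennreal (g z) \<le> ennreal B"
    using AE_circle_measure[OF M] by eventually_elim (simp add: bound ennreal_leI)
  have "emeasure (density M (\<lambda>z. ennreal (g z))) (space M) = (\<integral>\<^sup>+ z. ennreal (g z) \<partial>M)"
    using emeasure_density[OF g_meas sets.top] by simp
  also have "\<dots> \<le> (\<integral>\<^sup>+ z. ennreal B \<partial>M)"
    using \<open>AE z in M. ennreal (g z) \<le> ennreal B\<close> by (rule nn_integral_mono_AE)
  also have "\<dots> < \<infinity>"
    by (simp add: ennreal_mult_eq_top_iff less_top[symmetric])
  finally have "finite_measure (density M (\<lambda>z. ennreal (g z)))"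
    by (intro finite_measureI) simp
  moreover have "emeasure (density M (\<lambda>z. ennreal (g z))) (UNIV - sphere 0 1) = 0"
    using emeasure_density[OF g_meas null_setsD2[OF null_sets_circle_measure[OF M]]]
      nn_integral_null_set[OF null_sets_circle_measure[OF M]] by simp
  ultimately show ?thesis
    using M by (simp add: circle_measure_def)
qed

lemma phi_normal_hsum_eq_0:
  assumes normal: "phi_normal t0 r \<nu> n" and circle: "\<And>j. j < r \<Longrightarrow> circle_measure (\<nu> j)"
    and top: "d (nsize r n) = 0"
    and orth: "\<And>j k. j < r \<Longrightarrow> k < n j \<Longrightarrow>
      integral\<^sup>L (\<nu> j) (\<lambda>z. hsum t0 (nsize r n) d z * hpow t0 (int (n j) - 2 * int k) z) = 0"
  shows "hsum t0 (nsize r n) d = (\<lambda>z. 0)"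
proof -
  let ?N = "nsize r n"
  define admissible where "admissible \<phi> \<longleftrightarrow> (\<exists>c. c ?N = 1 \<and> \<phi> = hsum t0 ?N c) \<and>
    (\<forall>j<r. \<forall>k<n j. integral\<^sup>L (\<nu> j) (\<lambda>z. \<phi> z * hpow t0 (int (n j) - 2 * int k) z) = 0)" for \<phi>
  have "\<exists>!\<phi>. admissible \<phi>"
    using normal unfolding phi_normal_def admissible_def .
  then obtain \<phi> where \<phi>: "admissible \<phi>" and unique: "\<And>\<psi>. admissible \<psi> \<Longrightarrow> \<psi> = \<phi>"
    by auto
  then obtain c where c: "c ?N = 1" "\<phi> = hsum t0 ?N c"
    unfolding admissible_def by blast
  have sum_eq: "hsum t0 ?N (\<lambda>i. c i + d i) = (\<lambda>z. hsum t0 ?N c z + hsum t0 ?N d z)"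
    by (simp add: fun_eq_iff hsum_def distrib_right sum.distrib)
  have "admissible (hsum t0 ?N (\<lambda>i. c i + d i))"
    unfolding admissible_def
  proof (intro conjI allI impI)
    show "\<exists>c'. c' ?N = 1 \<and> hsum t0 ?N (\<lambda>i. c i + d i) = hsum t0 ?N c'"
      using c(1) top by (intro exI[of _ "\<lambda>i. c i + d i"]) simp
    fix j k
    assume j: "j < r" and k: "k < n j"
    have "integral\<^sup>L (\<nu> j) (\<lambda>z. hsum t0 ?N (\<lambda>i. c i + d i) z * hpow t0 (int (n j) - 2 * int k) z)
        = integral\<^sup>L (\<nu> j) (\<lambda>z. hsum t0 ?N c z * hpow t0 (int (n j) - 2 * int k) z)
          + integral\<^sup>L (\<nu> j) (\<lambda>z. hsum t0 ?N d z * hpow t0 (int (n j) - 2 * int k) z)"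
      unfolding sum_eq distrib_right
      by (intro Bochner_Integration.integral_add integrable_circle_measure_hsum circle[OF j])
    also have "\<dots> = 0"
      using \<phi> c(2) orth[OF j k] j k unfolding admissible_def by simp
    finally show "integral\<^sup>L (\<nu> j)
        (\<lambda>z. hsum t0 ?N (\<lambda>i. c i + d i) z * hpow t0 (int (n j) - 2 * int k) z) = 0" .
  qed
  then have "hsum t0 ?N (\<lambda>i. c i + d i) = hsum t0 ?N c"
    using unique c(2) by simp
  then show ?thesis
    by (simp add: sum_eq fun_eq_iff)
qed

lemma paraorth_coeff_0:
  assumes "paraorth t0 r \<mu> n \<tau> X" and "X = hsum t0 (nsize r n + 1) c"
  shows "c 0 = \<tau> * cnj (c (nsize r n + 1))"
proof -
  from assms(1) have "\<And>z. z \<noteq> 0 \<Longrightarrow> X z = \<tau> * cnj (X (1 / cnj z))"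
    unfolding paraorth_def by blast
  from hsum_coeff_reflect[OF this[unfolded assms(2)], of 0] show ?thesis
    by simp
qed

lemma paraorth_lead_coeff_neq_0:
  assumes circle: "\<And>j. j < r \<Longrightarrow> circle_measure (\<mu> j)"
    and normal: "phi_normal t0 r \<mu> n"
    and para: "paraorth t0 r \<mu> n \<tau> X"
    and X: "X = hsum t0 (nsize r n + 1) c"
    and nonzero: "X \<noteq> (\<lambda>z. 0)"
  shows "c (nsize r n + 1) \<noteq> 0"
proof
  let ?N = "nsize r n"
  assume top: "c (?N + 1) = 0"
  with paraorth_coeff_0[OF para X] have "c 0 = 0"
    by simp
  then have X_shift: "X z = hpow t0 1 z * hsum t0 ?N (\<lambda>i. c (Suc i)) z" for z
    unfolding X using hsum_Suc_shift by simp
  have "hsum t0 ?N (\<lambda>i. c (Suc i)) = (\<lambda>z. 0)"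
  proof (rule phi_normal_hsum_eq_0[OF normal circle])
    show "c (Suc ?N) = 0"
      using top by simp
    fix j k
    assume "j < r" "k < n j"
    with para have "integral\<^sup>L (\<mu> j) (\<lambda>z. X z * hpow t0 (int (n j) - 1 - 2 * int k) z) = 0"
      unfolding paraorth_def by blast
    moreover have "X z * hpow t0 (int (n j) - 1 - 2 * int k) z
        = hsum t0 ?N (\<lambda>i. c (Suc i)) z * hpow t0 (int (n j) - 2 * int k) z" for z
    proof -
      have "hpow t0 1 z * hpow t0 (int (n j) - 1 - 2 * int k) z = hpow t0 (int (n j) - 2 * int k) z"
        by (simp add: hpow_add)
      then show ?thesis
        unfolding X_shift by (metis mult.assoc mult.commute)
    qed
    ultimately show "integral\<^sup>L (\<mu> j)
        (\<lambda>z. hsum t0 ?N (\<lambda>i. c (Suc i)) z * hpow t0 (int (n j) - 2 * int k) z) = 0"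
      by simp
  qed
  with nonzero X_shift show False
    by (simp add: fun_eq_iff)
qed

lemma norm_diff_sq_mult_on_circle:
  assumes "cmod z = 1" and "z0 \<noteq> 0"
  shows "complex_of_real ((cmod (z - z0))\<^sup>2) * z = - cnj z0 * (z - z0) * (z - 1 / cnj z0)"
proof -
  have "cnj z * z = 1"
    using complex_norm_square[of z] assms(1) by (simp add: mult.commute)
  then have "complex_of_real ((cmod (z - z0))\<^sup>2) * z = (z - z0) * (1 - cnj z0 * z)"
    unfolding complex_norm_square by (simp add: algebra_simps)
  also have "\<dots> = - cnj z0 * (z - z0) * (z - 1 / cnj z0)"
    using assms(2) by (simp add: field_simps)
  finally show ?thesis .
qed

lemma norm_diff_sq_hsum_on_circle:
  assumes z: "cmod z = 1" and z0: "z0 \<noteq> 0" and R: "degree R < N"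
  shows "(cmod (z - z0))\<^sup>2 *\<^sub>R (hsum t0 N (coeff R) z * hpow t0 m z)
    = - cnj z0 * (hsum t0 (N + 1) (coeff ([:- z0, 1:] * [:- (1 / cnj z0), 1:] * R)) z * hpow t0 (m - 1) z)"
proof -
  let ?Q = "[:- z0, 1:] * [:- (1 / cnj z0), 1:] * R"
  define a where "a = hpow t0 (- int (N + 1)) z"
  define b where "b = hpow t0 1 z"
  define h where "h = hpow t0 (m - 1) z"
  have "z \<noteq> 0"
    using z by auto
  have "degree ?Q \<le> N + 1"
    using R degree_mult_le[of "[:- z0, 1:] * [:- (1 / cnj z0), 1:]" R]
      degree_mult_le[of "[:- z0, 1:]" "[:- (1 / cnj z0), 1:]"] by simp
  then have Q: "hsum t0 (N + 1) (coeff ?Q) z = a * poly ?Q z"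
    unfolding a_def by (rule hsum_coeff[OF \<open>z \<noteq> 0\<close>])
  have "a * b = hpow t0 (- int N) z"
    by (simp add: a_def b_def hpow_add)
  with R have hsum_R: "hsum t0 N (coeff R) z = a * b * poly R z"
    using hsum_coeff[OF \<open>z \<noteq> 0\<close>, of R N] by simp
  have hpow_m: "hpow t0 m z = b * h"
    by (simp add: b_def h_def hpow_add)
  have b_sq: "b * b = z"
    using hpow_2 by (simp add: b_def hpow_add)
  have poly_Q: "poly ?Q z = (z - z0) * (z - 1 / cnj z0) * poly R z"
    by (simp only: poly_mult poly_pCons poly_0) (simp add: algebra_simps)
  have "(cmod (z - z0))\<^sup>2 *\<^sub>R (hsum t0 N (coeff R) z * hpow t0 m z)
      = complex_of_real ((cmod (z - z0))\<^sup>2) * (b * b) * a * poly R z * h"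
    unfolding hsum_R hpow_m scaleR_conv_of_real by (simp only: mult_ac)
  also have "\<dots> = - cnj z0 * (z - z0) * (z - 1 / cnj z0) * a * poly R z * h"
    unfolding b_sq norm_diff_sq_mult_on_circle[OF z z0] ..
  also have "\<dots> = - cnj z0 * (hsum t0 (N + 1) (coeff ?Q) z * hpow t0 (m - 1) z)"
    unfolding Q poly_Q h_def by (simp only: mult_ac)
  finally show ?thesis .
qed

lemma integral_density_norm_diff_sq_hsum:
  assumes M: "circle_measure M" and z0: "z0 \<noteq> 0" and R: "degree R < N"
  shows "integral\<^sup>L (density M (\<lambda>z. ennreal ((cmod (z - z0))\<^sup>2))) (\<lambda>z. hsum t0 N (coeff R) z * hpow t0 m z)
    = - cnj z0 * integral\<^sup>L M
        (\<lambda>z. hsum t0 (N + 1) (coeff ([:- z0, 1:] * [:- (1 / cnj z0), 1:] * R)) z * hpow t0 (m - 1) z)"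
proof -
  have "integral\<^sup>L (density M (\<lambda>z. ennreal ((cmod (z - z0))\<^sup>2))) (\<lambda>z. hsum t0 N (coeff R) z * hpow t0 m z)
      = integral\<^sup>L M (\<lambda>z. (cmod (z - z0))\<^sup>2 *\<^sub>R (hsum t0 N (coeff R) z * hpow t0 m z))"
    by (rule integral_density) (auto intro: measurable_circle_measure[OF M])
  also have "\<dots> = integral\<^sup>L M (\<lambda>z. - cnj z0 *
      (hsum t0 (N + 1) (coeff ([:- z0, 1:] * [:- (1 / cnj z0), 1:] * R)) z * hpow t0 (m - 1) z))"
    using AE_circle_measure[OF M]
    by (intro integral_cong_AE measurable_circle_measure[OF M])
      (auto elim!: eventually_mono simp: norm_diff_sq_hsum_on_circle[OF _ z0 R])
  finally show ?thesis
    by simp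
qed

lemma poly_two_roots_factor:
  fixes p :: "'a::idom poly"
  assumes "poly p a = 0" and "poly p b = 0" and "a \<noteq> b"
  obtains q where "p = [:- a, 1:] * [:- b, 1:] * q"
proof -
  from assms(1) have "[:- a, 1:] dvd p"
    by (simp add: poly_eq_0_iff_dvd)
  then obtain q1 where p: "p = [:- a, 1:] * q1"
    by (rule dvdE)
  with assms(2,3) have "[:- b, 1:] dvd q1"
    by (simp add: poly_eq_0_iff_dvd)
  then obtain q where q1: "q1 = [:- b, 1:] * q"
    by (rule dvdE)
  have "p = [:- a, 1:] * [:- b, 1:] * q"
    unfolding p q1 by (rule mult.assoc[symmetric])
  then show ?thesis
    by (rule that)
qed

lemma inverse_cnj_neq_self:
  assumes "z \<noteq> 0" and "cmod z \<noteq> 1"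
  shows "1 / cnj z \<noteq> z"
proof
  assume "1 / cnj z = z"
  with assms(1) have "z * cnj z = 1"
    by (simp add: field_simps)
  then have "complex_of_real ((cmod z)\<^sup>2) = 1"
    unfolding complex_norm_square .
  then have "(cmod z)\<^sup>2 = 1"
    using of_real_eq_1_iff by blast
  with assms(2) show False
    by (smt (verit) norm_ge_zero power2_eq_1_iff)
qed

lemma paraorth_poly_root_reflect:
  assumes para: "paraorth t0 r \<mu> n \<tau> X"
    and X: "X = hsum t0 (nsize r n + 1) (coeff P)" and deg: "degree P \<le> nsize r n + 1"
    and root: "poly P z0 = 0" and z0: "z0 \<noteq> 0"
  shows "poly P (1 / cnj z0) = 0"
proof -
  have X_poly: "X z = hpow t0 (- int (nsize r n + 1)) z * poly P z" if "z \<noteq> 0" for z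
    using hsum_coeff[OF that deg] X by simp
  have inv: "\<And>z. z \<noteq> 0 \<Longrightarrow> X z = \<tau> * cnj (X (1 / cnj z))"
    using para unfolding paraorth_def by blast
  have "X (1 / cnj z0) = \<tau> * cnj (X (1 / cnj (1 / cnj z0)))"
    by (rule inv) (use z0 in simp)
  also have "\<dots> = 0"
    using X_poly[OF z0] root by simp
  finally show ?thesis
    using X_poly[of "1 / cnj z0"] z0 by (simp add: hpow_eq_0_iff)
qed

lemma paraorth_factor_orthogonal_density:
  assumes circle: "\<And>j. j < r \<Longrightarrow> circle_measure (\<mu> j)"
    and para: "paraorth t0 r \<mu> n \<tau> X"
    and X: "X = hsum t0 (nsize r n + 1) (coeff ([:- z0, 1:] * [:- (1 / cnj z0), 1:] * R))"
    and z0: "z0 \<noteq> 0" and deg_R: "degree R < nsize r n"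
    and j: "j < r" and k: "k < n j"
  shows "integral\<^sup>L (density (\<mu> j) (\<lambda>z. ennreal ((cmod (z - z0))\<^sup>2)))
    (\<lambda>z. hsum t0 (nsize r n) (coeff R) z * hpow t0 (int (n j) - 2 * int k) z) = 0"
proof -
  have exponent: "int (n j) - 2 * int k - 1 = int (n j) - 1 - 2 * int k"
    by simp
  have "integral\<^sup>L (density (\<mu> j) (\<lambda>z. ennreal ((cmod (z - z0))\<^sup>2)))
      (\<lambda>z. hsum t0 (nsize r n) (coeff R) z * hpow t0 (int (n j) - 2 * int k) z)
      = - cnj z0 * integral\<^sup>L (\<mu> j) (\<lambda>z. X z * hpow t0 (int (n j) - 1 - 2 * int k) z)"
    using integral_density_norm_diff_sq_hsum[OF circle[OF j] z0 deg_R, of t0 "int (n j) - 2 * int k"]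
    unfolding X exponent .
  also have "\<dots> = 0"
    using para j k unfolding paraorth_def by simp
  finally show ?thesis .
qed

lemma paraorth_root_off_circle_not_phi_normal:
  assumes circle: "\<And>j. j < r \<Longrightarrow> circle_measure (\<mu> j)"
    and para: "paraorth t0 r \<mu> n \<tau> X"
    and X: "X = hsum t0 (nsize r n + 1) (coeff P)"
    and deg: "degree P = nsize r n + 1"
    and root: "poly P z0 = 0" and z0: "z0 \<noteq> 0" "cmod z0 \<noteq> 1"
  shows "\<not> phi_normal t0 r (\<lambda>j. density (\<mu> j) (\<lambda>z. ennreal ((cmod (z - z0))\<^sup>2))) n"
proof
  let ?N = "nsize r n" and ?w = "1 / cnj z0"
  assume normal: "phi_normal t0 r (\<lambda>j. density (\<mu> j) (\<lambda>z. ennreal ((cmod (z - z0))\<^sup>2))) n"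
  have "poly P ?w = 0"
    using paraorth_poly_root_reflect[OF para X _ root z0(1)] deg by simp
  moreover have "z0 \<noteq> ?w"
    using inverse_cnj_neq_self[OF z0] by simp
  ultimately obtain R where P: "P = [:- z0, 1:] * [:- ?w, 1:] * R"
    using poly_two_roots_factor[OF root] by blast
  with deg have "R \<noteq> 0"
    by auto
  have "degree ([:- z0, 1:] * [:- ?w, 1:]) = 2"
    by (subst degree_mult_eq) simp_all
  then have "degree P = degree R + 2"
    unfolding P by (subst degree_mult_eq) (use \<open>R \<noteq> 0\<close> in auto)
  with deg have deg_R: "degree R < ?N"
    by simp
  have "hsum t0 ?N (coeff R) = (\<lambda>z. 0)"
  proof (rule phi_normal_hsum_eq_0[OF normal])
    show "circle_measure (density (\<mu> j) (\<lambda>z. ennreal ((cmod (z - z0))\<^sup>2)))" if "j < r" for j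
      using circle[OF that] by (rule circle_measure_density) (intro continuous_intros)
    show "coeff R ?N = 0"
      using deg_R by (simp add: coeff_eq_0)
  qed (rule paraorth_factor_orthogonal_density[OF circle para X[unfolded P] z0(1) deg_R])
  then have "R = 0"
    by (rule hsum_coeff_eq_0D) (use deg_R in linarith)
  with \<open>R \<noteq> 0\<close> show False
    by simp
qed

theorem theorem4p1:
  fixes t0 :: real and r :: nat and \<mu> :: "nat \<Rightarrow> complex measure"
    and n :: "nat \<Rightarrow> nat" and \<tau> :: complex and X :: "complex \<Rightarrow> complex"
  assumes meas: "\<And>j. j < r \<Longrightarrow> circle_measure (\<mu> j)"
    and supp: "\<And>j. j < r \<Longrightarrow> infinite (msupport (\<mu> j))"
    and normal: "phi_normal t0 r \<mu> n"
    and tau: "cmod \<tau> = 1"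
    and para: "paraorth t0 r \<mu> n \<tau> X"
    and nonzero: "X \<noteq> (\<lambda>z. 0)"
    and normal_mod: "\<And>z0. z0 \<noteq> 0 \<Longrightarrow> cmod z0 \<noteq> 1 \<Longrightarrow>
        phi_normal t0 r (\<lambda>j. density (\<mu> j) (\<lambda>z. ennreal ((cmod (z - z0))\<^sup>2))) n"
  shows "\<exists>P :: complex poly.
           (\<forall>z. z \<noteq> 0 \<longrightarrow> hpow t0 (int (nsize r n) + 1) z * X z = poly P z) \<and>
           degree P = nsize r n + 1 \<and>
           (\<forall>z. poly P z = 0 \<longrightarrow> cmod z = 1)"
proof -
  let ?N = "nsize r n"
  from para obtain c where X: "X = hsum t0 (?N + 1) c"
    unfolding paraorth_def hspan_def by blast
  define P where "P = hsum_poly (?N + 1) c"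
  have top: "c (?N + 1) \<noteq> 0"
    using paraorth_lead_coeff_neq_0[OF meas normal para X nonzero] .
  then have deg: "degree P = ?N + 1"
    unfolding P_def by (rule degree_hsum_poly)
  have P0: "poly P 0 \<noteq> 0"
    using paraorth_coeff_0[OF para X] top tau by (auto simp: P_def poly_0_coeff_0 coeff_hsum_poly)
  have X_P: "X = hsum t0 (?N + 1) (coeff P)"
    unfolding X P_def hsum_coeff_hsum_poly ..
  have roots: "cmod z0 = 1" if root: "poly P z0 = 0" for z0
  proof (rule ccontr)
    assume "cmod z0 \<noteq> 1"
    moreover from root P0 have "z0 \<noteq> 0"
      by auto
    ultimately show False
      using paraorth_root_off_circle_not_phi_normal[OF meas para X_P deg root] normal_mod by blast
  qed
  have "hpow t0 (int ?N + 1) z * X z = poly P z" if "z \<noteq> 0" for z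
    using hpow_mult_hsum[OF that, of t0 "?N + 1" c] by (simp add: X P_def add.commute)
  with deg roots show ?thesis
    by blast
qed

end
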